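(* Suppose the filtered vector space $(V,\ell)$ satisfies the best approximation property. Then $V$ has a basis which is $\ell$-orthogonal. Moreover, if $W\le V$ is a subspace and $S$ is an $\ell$-orthogonal basis of $W$, then there is an $\ell$-orthogonal basis of $V$ containing $S$.
   Context: A filtered vector space over a field $\kappa$ is a pair $(V,\ell)$ with $V$ a $\kappa$-vector space and $\ell\colon V\to\mathbb{R}\cup\{-\infty\}$ such that $\ell(v)=-\infty$ iff $v=0$, $\ell(cv)=\ell(v)$ for $c\in\kappa\setminus\{0\}$, and $\ell(v+w)\le\max\{\ell(v),\ell(w)\}$. A subset $S\subset V\setminus\{0\}$ is $\ell$-orthogonal if $\ell(\sum_{i=1}^n c_iv_i)=\max\{\ell(v_i):c_i\neq0\}$ for all finitely many distinct $v_1,\dots,v_n\in S$ and $c_i\in\kappa$. $(V,\ell)$ satisfies the best approximation property if for every proper subspace $W\subsetneq V$ and every $v\in V\setminus W$ there is $w_0\in W$ with $\ell(v-w_0)\le\ell(v-w)$ for all $w\in W$. *)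

theory Defs
  imports Complex_Main "HOL-Library.Extended_Real"
begin

definition filtered_vector_space ::
  "('k::field \<Rightarrow> 'v::ab_group_add \<Rightarrow> 'v) \<Rightarrow> ('v \<Rightarrow> ereal) \<Rightarrow> bool" where
  "filtered_vector_space scale l \<longleftrightarrow>
     vector_space scale \<and>
     (\<forall>v. l v \<noteq> \<infinity>) \<and>
     (\<forall>v. l v = -\<infinity> \<longleftrightarrow> v = 0) \<and>
     (\<forall>c v. c \<noteq> 0 \<longrightarrow> l (scale c v) = l v) \<and>
     (\<forall>v w. l (v + w) \<le> max (l v) (l w))"

text \<open>l-orthogonal subsets: for finitely many distinct elements of S and any
  coefficients, l of the linear combination is the maximum of l over those
  elements with nonzero coefficient (the empty maximum being -infinity).\<close>

definition l_orthogonal ::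
  "('k::field \<Rightarrow> 'v::ab_group_add \<Rightarrow> 'v) \<Rightarrow> ('v \<Rightarrow> ereal) \<Rightarrow> 'v set \<Rightarrow> bool" where
  "l_orthogonal scale l S \<longleftrightarrow>
     S \<subseteq> UNIV - {0} \<and>
     (\<forall>T c. finite T \<longrightarrow> T \<subseteq> S \<longrightarrow>
        l (\<Sum>v\<in>T. scale (c v) v) = (SUP v\<in>{v\<in>T. c v \<noteq> 0}. l v))"

definition best_approximation_property ::
  "('k::field \<Rightarrow> 'v::ab_group_add \<Rightarrow> 'v) \<Rightarrow> ('v \<Rightarrow> ereal) \<Rightarrow> bool" where
  "best_approximation_property scale l \<longleftrightarrow>
     (\<forall>W v. module.subspace scale W \<longrightarrow> W \<noteq> UNIV \<longrightarrow> v \<notin> W \<longrightarrow>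
        (\<exists>w0\<in>W. \<forall>w\<in>W. l (v - w0) \<le> l (v - w)))"

end

theory Submission
  imports Defs
begin

text \<open>For a proper subspace \<open>W\<close> and \<open>v \<notin> W\<close>, a best approximation \<open>w\<^sub>0\<close> of \<open>v\<close> in \<open>W\<close>
  yields \<open>u = v - w\<^sub>0 \<notin> W\<close> with \<open>\<ell>(u) \<le> \<ell>(u + w)\<close> for all \<open>w \<in> W\<close>. By the ultrametric
  inequality this forces \<open>\<ell>(w + c u) = max(\<ell>(w), \<ell>(u))\<close> for \<open>c \<noteq> 0\<close>, so adjoining \<open>u\<close> to an
  \<open>\<ell>-orthogonal\<close> set spanning \<open>W\<close> keeps it \<open>\<ell>-orthogonal\<close>. Orthogonality is a property of finite
  subsets, so Zorn's lemma gives a maximal \<open>\<ell>-orthogonal\<close> set containing \<open>S\<close>; by maximality it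
  spans \<open>V\<close>, and \<open>\<ell>-orthogonal\<close> sets are independent because \<open>\<ell>\<close> is \<open>-\<infinity>\<close> only at \<open>0\<close>.\<close>

lemma l_orthogonal_Union_chain:
  assumes "C \<noteq> {}" and "chain\<^sub>\<subseteq> C" and "\<And>B. B \<in> C \<Longrightarrow> l_orthogonal scale l B"
  shows "l_orthogonal scale l (\<Union>C)"
  unfolding l_orthogonal_def
proof (intro conjI allI impI)
  show "\<Union>C \<subseteq> UNIV - {0}"
    using assms(3) unfolding l_orthogonal_def by blast
next
  fix T c assume T: "finite T" "T \<subseteq> \<Union>C"
  obtain B where "B \<in> C" "T \<subseteq> B"
    using finite_subset_Union_chain[OF T assms(1)] assms(2)
    unfolding chain_subset_alt_def by blast
  then show "l (\<Sum>v\<in>T. scale (c v) v) = (SUP v\<in>{v\<in>T. c v \<noteq> 0}. l v)"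
    using assms(3) T(1) unfolding l_orthogonal_def by blast
qed

text \<open>Unlike \<^const>\<open>filtered_vector_space\<close>, the locale does not require \<open>l v \<noteq> \<infinity>\<close>;
  nothing below needs it.\<close>

locale filtered_space = vector_space scale
  for scale :: "'k::field \<Rightarrow> 'v::ab_group_add \<Rightarrow> 'v" +
  fixes l :: "'v \<Rightarrow> ereal"
  assumes l_eq_minf_iff: "l v = -\<infinity> \<longleftrightarrow> v = 0"
    and l_scale: "c \<noteq> 0 \<Longrightarrow> l (scale c v) = l v"
    and l_add_le: "l (v + w) \<le> max (l v) (l w)"
begin

lemma l_minus: "l (- v) = l v"
  using l_scale[of "-1" v] by simp

lemma l_add_eq_right: "l a < l b \<Longrightarrow> l (a + b) = l b"
proof -
  assume less: "l a < l b"
  have "l b = l ((a + b) + - a)" by simp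
  also have "\<dots> \<le> max (l (a + b)) (l a)" using l_add_le l_minus by metis
  finally have "l b \<le> l (a + b)" using less by (auto simp: max_def split: if_splits)
  moreover have "l (a + b) \<le> l b" using l_add_le[of a b] less by simp
  ultimately show ?thesis by simp
qed

lemma l_orthogonal_empty: "l_orthogonal scale l {}"
  unfolding l_orthogonal_def using l_eq_minf_iff by (simp add: bot_ereal_def)

lemma l_orthogonal_imp_independent:
  assumes "l_orthogonal scale l M"
  shows "independent M"
  unfolding independent_explicit_module
proof (intro allI impI)
  fix T c v
  assume T: "finite T" "T \<subseteq> M" "(\<Sum>v\<in>T. scale (c v) v) = 0" "v \<in> T"
  have "l v \<le> -\<infinity>" if "c v \<noteq> 0"
  proof -
    have "l v \<le> (SUP v\<in>{v\<in>T. c v \<noteq> 0}. l v)"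
      using that T(4) by (intro SUP_upper) auto
    also have "\<dots> = l (\<Sum>v\<in>T. scale (c v) v)"
      using assms T(1,2) unfolding l_orthogonal_def by simp
    also have "\<dots> = -\<infinity>"
      using T(3) l_eq_minf_iff by simp
    finally show ?thesis .
  qed
  moreover have "l v \<noteq> -\<infinity>"
    using assms T(2,4) l_eq_minf_iff unfolding l_orthogonal_def by blast
  ultimately show "c v = 0" by auto
qed

definition l_minimal_in_coset :: "'v \<Rightarrow> 'v set \<Rightarrow> bool" where
  "l_minimal_in_coset u W \<longleftrightarrow> (\<forall>w\<in>W. l u \<le> l (u + w))"

lemma best_approximation_obtains_l_minimal_in_coset:
  assumes "best_approximation_property scale l" and "subspace W" and "W \<noteq> UNIV"
  obtains u where "u \<notin> W" and "l_minimal_in_coset u W"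
proof -
  obtain v where v: "v \<notin> W" using assms(3) by blast
  then obtain w\<^sub>0 where w\<^sub>0: "w\<^sub>0 \<in> W" "\<And>w. w \<in> W \<Longrightarrow> l (v - w\<^sub>0) \<le> l (v - w)"
    using assms unfolding best_approximation_property_def by meson
  have "v - w\<^sub>0 \<notin> W"
    using v w\<^sub>0(1) assms(2) subspace_add by fastforce
  moreover have "l_minimal_in_coset (v - w\<^sub>0) W"
    unfolding l_minimal_in_coset_def
  proof
    fix w assume "w \<in> W"
    then have "l (v - w\<^sub>0) \<le> l (v - (w\<^sub>0 - w))"
      using w\<^sub>0 assms(2) subspace_diff by blast
    then show "l (v - w\<^sub>0) \<le> l (v - w\<^sub>0 + w)" by (simp add: algebra_simps)
  qed
  ultimately show ?thesis using that by blast
qed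

lemma l_add_scale_l_minimal_in_coset:
  assumes "subspace W" and "l_minimal_in_coset u W" and "x \<in> W" and "c \<noteq> 0"
  shows "l (x + scale c u) = max (l x) (l u)"
proof -
  define y where "y = scale (inverse c) x"
  have y: "y \<in> W" using assms(1,3) subspace_scale y_def by blast
  have "l (u + y) = max (l y) (l u)"
  proof (cases "l u < l y")
    case True
    then show ?thesis using l_add_eq_right[of u y] by simp
  next
    case False
    then have "l (u + y) \<le> l u" using l_add_le[of u y] by simp
    moreover have "l u \<le> l (u + y)"
      using assms(2) y unfolding l_minimal_in_coset_def by blast
    ultimately show ?thesis using False by (auto simp: max_def)
  qed
  moreover have "x + scale c u = scale c (u + y)"
    using assms(4) by (simp add: y_def scale_right_distrib add.commute)
  ultimately show ?thesis
    using assms(4) l_scale by (simp add: y_def)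
qed

lemma l_orthogonal_insert:
  assumes M: "l_orthogonal scale l M"
    and u: "u \<notin> span M" "l_minimal_in_coset u (span M)"
  shows "l_orthogonal scale l (insert u M)"
  unfolding l_orthogonal_def
proof (intro conjI allI impI)
  show "insert u M \<subseteq> UNIV - {0}"
    using M u(1) span_zero unfolding l_orthogonal_def by auto
next
  fix T and c :: "'v \<Rightarrow> 'k"
  assume T: "finite T" "T \<subseteq> insert u M"
  define d where "d = (if u \<in> T then c u else 0)"
  define x where "x = (\<Sum>v\<in>T - {u}. scale (c v) v)"
  have x: "x \<in> span M"
    unfolding x_def using T(2) by (intro span_sum span_scale span_base) auto
  have lx: "l x = (SUP v\<in>{v\<in>T - {u}. c v \<noteq> 0}. l v)"
    using M T unfolding l_orthogonal_def x_def by blast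
  have sum: "(\<Sum>v\<in>T. scale (c v) v) = x + scale d u"
    unfolding x_def d_def using T(1) by (simp add: sum.remove add.commute)
  show "l (\<Sum>v\<in>T. scale (c v) v) = (SUP v\<in>{v\<in>T. c v \<noteq> 0}. l v)"
  proof (cases "d = 0")
    case True
    then have "{v\<in>T. c v \<noteq> 0} = {v\<in>T - {u}. c v \<noteq> 0}"
      unfolding d_def by (auto split: if_splits)
    then show ?thesis using sum lx True by simp
  next
    case False
    then have "{v\<in>T. c v \<noteq> 0} = insert u {v\<in>T - {u}. c v \<noteq> 0}"
      unfolding d_def by (auto split: if_splits)
    then show ?thesis
      using sum lx l_add_scale_l_minimal_in_coset[OF subspace_span u(2) x False]
      by (simp add: sup_max max.commute)
  qed
qed

lemma l_orthogonal_extend_basis: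
  assumes "best_approximation_property scale l" and "l_orthogonal scale l S"
  obtains B where "independent B" "span B = UNIV" "l_orthogonal scale l B" "S \<subseteq> B"
proof -
  define \<A> where "\<A> = {B. S \<subseteq> B \<and> l_orthogonal scale l B}"
  have "\<exists>M\<in>\<A>. \<forall>X\<in>\<A>. M \<subseteq> X \<longrightarrow> X = M"
  proof (rule subset_Zorn_nonempty)
    show "\<A> \<noteq> {}" using assms(2) unfolding \<A>_def by blast
  next
    fix C assume C: "C \<noteq> {}" "subset.chain \<A> C"
    then have "C \<subseteq> \<A>" and "chain\<^sub>\<subseteq> C"
      by (simp_all add: subset_chain_def chain_subset_def)
    then have "l_orthogonal scale l (\<Union>C)"
      using l_orthogonal_Union_chain[OF C(1)] unfolding \<A>_def by blast
    moreover have "S \<subseteq> \<Union>C" using C(1) \<open>C \<subseteq> \<A>\<close> unfolding \<A>_def by blast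
    ultimately show "\<Union>C \<in> \<A>" unfolding \<A>_def by blast
  qed
  then obtain M where "M \<in> \<A>" and maximal: "\<And>X. X \<in> \<A> \<Longrightarrow> M \<subseteq> X \<Longrightarrow> X = M"
    by blast
  then have "S \<subseteq> M" and M: "l_orthogonal scale l M" unfolding \<A>_def by auto
  have "span M = UNIV"
  proof (rule ccontr)
    assume "span M \<noteq> UNIV"
    then obtain u where u: "u \<notin> span M" "l_minimal_in_coset u (span M)"
      using best_approximation_obtains_l_minimal_in_coset[OF assms(1) subspace_span] by blast
    have "insert u M \<in> \<A>"
      using l_orthogonal_insert[OF M u] \<open>S \<subseteq> M\<close> unfolding \<A>_def by blast
    then have "insert u M = M" using maximal by blast
    then show False using u(1) span_base by blast
  qed
  then show ?thesis
    using that \<open>S \<subseteq> M\<close> M l_orthogonal_imp_independent by blast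
qed

end

theorem proposition3p7:
  fixes scale :: "'k::field \<Rightarrow> 'v::ab_group_add \<Rightarrow> 'v"
    and l :: "'v \<Rightarrow> ereal"
  assumes "filtered_vector_space scale l"
    and "best_approximation_property scale l"
  shows "(\<exists>B. \<not> module.dependent scale B \<and> module.span scale B = UNIV
              \<and> l_orthogonal scale l B)
       \<and> (\<forall>W S. module.subspace scale W \<longrightarrow> S \<subseteq> W \<longrightarrow> \<not> module.dependent scale S
              \<longrightarrow> module.span scale S = W \<longrightarrow> l_orthogonal scale l S \<longrightarrow>
              (\<exists>B. \<not> module.dependent scale B \<and> module.span scale B = UNIV
                   \<and> l_orthogonal scale l B \<and> S \<subseteq> B))"
proof -
  interpret filtered_space scale l
    using assms(1) unfolding filtered_vector_space_def
    by (intro filtered_space.intro filtered_space_axioms.intro) auto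
  have extend: "\<exists>B. independent B \<and> span B = UNIV \<and> l_orthogonal scale l B \<and> S \<subseteq> B"
    if "l_orthogonal scale l S" for S
    using l_orthogonal_extend_basis[OF assms(2) that] by blast
  show ?thesis
    using extend[OF l_orthogonal_empty] extend by blast
qed

end
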